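(* Let $A$ be a word-topic matrix, $\delta\ge0$, $B$ a $\delta$-biased minimum variance inverse of $A$, $x^*\in\mathcal{S}_k$, and let $x$ be the output of the Thresholded Linear Inverse algorithm on a document of $n$ words generated from $x^*$. Then with probability at least $1-2/k$: for every $i\in[k]$, if $x^*_i=0$ then $x_i=0$, and if $x^*_i\ge 4\lambda_\delta(A)\sqrt{(\log k)/n}+2\delta$ then $x_i>0$. In particular, if $x^*$ is $r$-sparse, all its nonzero entries are at least $\epsilon/r$ for some $\epsilon>4\delta r$, and $n\ge 64\,\lambda_\delta(A)^2r^2\log k/\epsilon^2$, then with probability at least $1-2/k$ the support of $x$ equals the support of $x^*$.
   Context: A word-topic matrix is a matrix $A\in\mathbb{R}^{D\times k}$ with nonnegative entries whose columns each sum to $1$. $\mathcal{S}_k=\{z\in\mathbb{R}^k_{\ge0}:\sum_i z_i=1\}$. A document of $n$ words generated from $x\in\mathcal{S}_k$ consists of words drawn i.i.d. from the categorical distribution on $[D]$ with probabilities $Ax$; its count vector $y\in\mathbb{R}^D$ records how many times each word occurs. For a matrix $M$, $\|M\|_{\max}=\max_{i,j}|M_{ij}|$. $\lambda_\delta(A)$ is the optimal value of: minimize $\|B\|_{\max}$ over $B\in\mathbb{R}^{k\times D}$ subject to $\|BA-I_k\|_{\max}\le\delta$; a $\delta$-biased minimum variance inverse is a matrix $B$ with $\|BA-I_k\|_{\max}\le\delta$ and $\|B\|_{\max}=\lambda_\delta(A)$. The Thresholded Linear Inverse algorithm, given $y$ and $B$: computes $\hat x=\frac1n By$; sets $\tau=2\lambda_\delta(A)\sqrt{(\log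 k)/n}+\delta$; outputs $x\in\mathbb{R}^k$ with $x_i=0$ if $\hat x_i<\tau$ and $x_i=\hat x_i$ otherwise. A vector is $r$-sparse if it has at most $r$ nonzero entries. *)

theory Defs
  imports "HOL-Probability.Probability"
begin

text \<open>Matrices are represented as functions nat => nat => real; only entries with
  row index < (number of rows) and column index < (number of columns) matter.
  A is D x k (A j i, word j, topic i); B is k x D.\<close>

definition max_norm :: "nat \<Rightarrow> nat \<Rightarrow> (nat \<Rightarrow> nat \<Rightarrow> real) \<Rightarrow> real" where
  "max_norm m p M = Max (insert 0 {\<bar>M i j\<bar> | i j. i < m \<and> j < p})"

definition word_topic :: "nat \<Rightarrow> nat \<Rightarrow> (nat \<Rightarrow> nat \<Rightarrow> real) \<Rightarrow> bool" where
  "word_topic D k A \<longleftrightarrow> (\<forall>j<D. \<forall>i<k. A j i \<ge> 0) \<and> (\<forall>i<k. (\<Sum>j<D. A j i) = 1)"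

definition in_simplex :: "nat \<Rightarrow> (nat \<Rightarrow> real) \<Rightarrow> bool" where
  "in_simplex k z \<longleftrightarrow> (\<forall>i<k. z i \<ge> 0) \<and> (\<Sum>i<k. z i) = 1"

definition BA_minus_I :: "nat \<Rightarrow> nat \<Rightarrow> (nat \<Rightarrow> nat \<Rightarrow> real) \<Rightarrow> (nat \<Rightarrow> nat \<Rightarrow> real) \<Rightarrow> nat \<Rightarrow> nat \<Rightarrow> real" where
  "BA_minus_I D k B A = (\<lambda>i l. (\<Sum>j<D. B i j * A j l) - (if i = l then 1 else 0))"

definition lambda_delta :: "nat \<Rightarrow> nat \<Rightarrow> (nat \<Rightarrow> nat \<Rightarrow> real) \<Rightarrow> real \<Rightarrow> real" where
  "lambda_delta D k A \<delta> =
     Inf {max_norm k D B | B. max_norm k k (BA_minus_I D k B A) \<le> \<delta>}"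

definition biased_mvi :: "nat \<Rightarrow> nat \<Rightarrow> (nat \<Rightarrow> nat \<Rightarrow> real) \<Rightarrow> real \<Rightarrow> (nat \<Rightarrow> nat \<Rightarrow> real) \<Rightarrow> bool" where
  "biased_mvi D k A \<delta> B \<longleftrightarrow> max_norm k k (BA_minus_I D k B A) \<le> \<delta> \<and>
      max_norm k D B = lambda_delta D k A \<delta>"

definition word_pmf :: "nat \<Rightarrow> nat \<Rightarrow> (nat \<Rightarrow> nat \<Rightarrow> real) \<Rightarrow> (nat \<Rightarrow> real) \<Rightarrow> nat pmf" where
  "word_pmf D k A x = embed_pmf (\<lambda>j. if j < D then (\<Sum>i<k. A j i * x i) else 0)"

definition doc_pmf :: "nat \<Rightarrow> nat \<Rightarrow> nat \<Rightarrow> (nat \<Rightarrow> nat \<Rightarrow> real) \<Rightarrow> (nat \<Rightarrow> real) \<Rightarrow> (nat \<Rightarrow> nat) pmf" where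
  "doc_pmf n D k A x = Pi_pmf {..<n} 0 (\<lambda>_. word_pmf D k A x)"

definition count_vec :: "nat \<Rightarrow> (nat \<Rightarrow> nat) \<Rightarrow> nat \<Rightarrow> real" where
  "count_vec n w j = real (card {t. t < n \<and> w t = j})"

definition TLI :: "nat \<Rightarrow> nat \<Rightarrow> (nat \<Rightarrow> nat \<Rightarrow> real) \<Rightarrow> real \<Rightarrow> (nat \<Rightarrow> nat \<Rightarrow> real) \<Rightarrow> nat \<Rightarrow> (nat \<Rightarrow> real) \<Rightarrow> nat \<Rightarrow> real" where
  "TLI D k A \<delta> B n y =
     (let xhat = (\<lambda>i. (1 / real n) * (\<Sum>j<D. B i j * y j));
          \<tau> = 2 * lambda_delta D k A \<delta> * sqrt (ln (real k) / real n) + \<delta>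
      in (\<lambda>i. if xhat i < \<tau> then 0 else xhat i))"

end

theory Submission
  imports Defs
begin

text \<open>Each coordinate of the linear estimate \<open>B y / n\<close> is an average of \<open>n\<close> i.i.d. terms bounded
  by \<open>\<lambda>\<^sub>\<delta>(A)\<close> whose mean is \<open>(B A x\<^sup>*)\<^sub>i\<close>, which differs from \<open>x\<^sup>*\<^sub>i\<close> by at most \<open>\<delta>\<close>.
  Hoeffding's inequality with deviation \<open>2 \<lambda>\<^sub>\<delta>(A) \<surd>(log k / n)\<close> bounds the failure probability of
  each coordinate by \<open>2/k\<^sup>2\<close>, so by the union bound, with probability at least \<open>1 - 2/k\<close>, every
  coordinate of the estimate lies within the threshold \<open>\<tau>\<close> of \<open>x\<^sup>*\<close>. On that event thresholding
  at \<open>\<tau>\<close> kills every zero coordinate and keeps every coordinate of size at least \<open>2\<tau>\<close>; in the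
  sparse case the sample-size bound makes \<open>2\<tau> \<le> \<epsilon>/r\<close>.\<close>

lemma finite_max_norm_entries:
  fixes M :: "nat \<Rightarrow> nat \<Rightarrow> real"
  shows "finite (insert 0 {\<bar>M i j\<bar> | i j. i < m \<and> j < p})"
proof -
  have "{\<bar>M i j\<bar> | i j. i < m \<and> j < p} = (\<lambda>(i, j). \<bar>M i j\<bar>) ` ({..<m} \<times> {..<p})" by auto
  thus ?thesis by simp
qed

lemma abs_le_max_norm: "i < m \<Longrightarrow> j < p \<Longrightarrow> \<bar>M i j\<bar> \<le> max_norm m p M"
  unfolding max_norm_def by (intro Max_ge[OF finite_max_norm_entries]) auto

lemma max_norm_nonneg: "0 \<le> max_norm m p M"
  unfolding max_norm_def by (intro Max_ge[OF finite_max_norm_entries]) auto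

lemma pmf_word_pmf:
  assumes "word_topic D k A" "in_simplex k x"
  shows "pmf (word_pmf D k A x) j = (if j < D then (\<Sum>i<k. A j i * x i) else 0)"
  unfolding word_pmf_def
proof (rule pmf_embed_pmf)
  let ?f = "\<lambda>j. if j < D then (\<Sum>i<k. A j i * x i) else 0"
  show nonneg: "\<And>j. 0 \<le> ?f j" using assms unfolding word_topic_def in_simplex_def
    by (auto intro!: sum_nonneg)
  have "(\<integral>\<^sup>+ j. ennreal (?f j) \<partial>count_space UNIV) = (\<Sum>j<D. ennreal (?f j))"
    by (rule nn_integral_count_space') auto
  also have "\<dots> = ennreal (\<Sum>j<D. ?f j)" using nonneg by (intro sum_ennreal)
  also have "(\<Sum>j<D. ?f j) = (\<Sum>i<k. x i * (\<Sum>j<D. A j i))"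
    by (simp add: sum.swap[of _ "{..<D}"] sum_distrib_left mult.commute)
  also have "\<dots> = 1" using assms unfolding word_topic_def in_simplex_def by simp
  finally show "(\<integral>\<^sup>+ j. ennreal (?f j) \<partial>count_space UNIV) = 1" by simp
qed

lemma expectation_word_pmf:
  assumes "word_topic D k A" "in_simplex k x"
  shows "measure_pmf.expectation (word_pmf D k A x) c = (\<Sum>j<D. c j * (\<Sum>l<k. A j l * x l))"
proof -
  have "measure_pmf.expectation (word_pmf D k A x) c = (\<Sum>j<D. c j * pmf (word_pmf D k A x) j)"
  proof (rule integral_measure_pmf_real)
    fix j assume "j \<in> set_pmf (word_pmf D k A x)"
    thus "j \<in> {..<D}" using pmf_word_pmf[OF assms, of j] by (auto simp: set_pmf_iff split: if_splits)
  qed simp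
  thus ?thesis using pmf_word_pmf[OF assms] by simp
qed

lemma sum_count_vec:
  "(\<Sum>j<D. f j * count_vec n w j) = (\<Sum>t<n. if w t < D then f (w t) else 0)"
proof -
  have "(\<Sum>t<n. if w t < D then f (w t) else 0) = (\<Sum>j<D. \<Sum>t<n. if w t = j then f j else 0)"
    by (subst sum.swap) (simp add: sum.delta)
  also have "\<dots> = (\<Sum>j<D. f j * count_vec n w j)"
    unfolding count_vec_def by (simp add: sum.If_cases Int_def conj_commute mult.commute)
  finally show ?thesis by simp
qed

lemma doc_pmf_hoeffding:
  fixes L e :: real and c :: "nat \<Rightarrow> real"
  assumes wt: "word_topic D k A" and sx: "in_simplex k x"
    and bound: "\<And>j. \<bar>c j\<bar> \<le> L" and "L > 0" "n > 0" "e \<ge> 0"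
  shows "measure_pmf.prob (doc_pmf n D k A x)
     {w. \<bar>(\<Sum>t<n. c (w t)) - real n * (\<Sum>j<D. c j * (\<Sum>l<k. A j l * x l))\<bar> \<ge> real n * e}
     \<le> 2 * exp (- (real n * e\<^sup>2) / (2 * L\<^sup>2))"
proof -
  let ?P = "doc_pmf n D k A x"
  let ?\<mu> = "\<Sum>j<D. c j * (\<Sum>l<k. A j l * x l)"
  interpret H: Hoeffding_ineq "measure_pmf ?P" "{..<n}" "\<lambda>t w. c (w t)" "\<lambda>_. -L" "\<lambda>_. L"
     "\<Sum>t\<in>{..<n}. measure_pmf.expectation ?P (\<lambda>w. c (w t))"
  proof unfold_locales
    show "prob_space.indep_vars (measure_pmf ?P) (\<lambda>_. borel) (\<lambda>t w. c (w t)) {..<n}"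
      unfolding doc_pmf_def
      by (intro prob_space.indep_vars_compose2[OF _ indep_vars_Pi_pmf])
         (auto simp: measure_pmf.prob_space_axioms)
    show "AE w in measure_pmf ?P. c (w t) \<in> {-L..L}" for t
    proof (rule AE_I2)
      show "c (w t) \<in> {-L..L}" for w using bound[of "w t"] by (auto simp: abs_le_iff)
    qed
  qed auto
  have "measure_pmf.expectation ?P (\<lambda>w. c (w t)) = ?\<mu>" if "t < n" for t
  proof -
    have "map_pmf (\<lambda>f. f t) ?P = word_pmf D k A x"
      unfolding doc_pmf_def using that by (subst Pi_pmf_component) auto
    thus ?thesis using expectation_word_pmf[OF wt sx, of c] by (metis integral_map_pmf)
  qed
  hence mean: "(\<Sum>t\<in>{..<n}. measure_pmf.expectation ?P (\<lambda>w. c (w t))) = real n * ?\<mu>" by simp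
  have "-2 * (real n * e)\<^sup>2 / (\<Sum>t\<in>{..<n}. (L - - L)\<^sup>2) = - (real n * e\<^sup>2) / (2 * L\<^sup>2)"
    using assms by (simp add: power2_eq_square field_simps)
  thus ?thesis using H.Hoeffding_ineq_abs_ge[of "real n * e"] assms unfolding mean by simp
qed

definition linear_estimate :: "nat \<Rightarrow> (nat \<Rightarrow> nat \<Rightarrow> real) \<Rightarrow> nat \<Rightarrow> (nat \<Rightarrow> nat) \<Rightarrow> nat \<Rightarrow> real" where
  "linear_estimate D B n w i = (\<Sum>j<D. B i j * count_vec n w j) / real n"

lemma linear_inverse_bias:
  assumes "in_simplex k x" "max_norm k k (BA_minus_I D k B A) \<le> \<delta>" "i < k"
  shows "\<bar>(\<Sum>j<D. B i j * (\<Sum>l<k. A j l * x l)) - x i\<bar> \<le> \<delta>"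
proof -
  let ?E = "BA_minus_I D k B A"
  have "(\<Sum>j<D. B i j * (\<Sum>l<k. A j l * x l)) = (\<Sum>l<k. (\<Sum>j<D. B i j * A j l) * x l)"
    by (simp add: sum_distrib_left sum_distrib_right mult.assoc sum.swap[of _ "{..<D}"])
  also have "\<dots> = (\<Sum>l<k. ?E i l * x l + (if i = l then x l else 0))"
    unfolding BA_minus_I_def by (intro sum.cong) (auto simp: algebra_simps)
  also have "\<dots> = (\<Sum>l<k. ?E i l * x l) + x i"
    using \<open>i < k\<close> by (simp add: sum.distrib)
  finally have "\<bar>(\<Sum>j<D. B i j * (\<Sum>l<k. A j l * x l)) - x i\<bar> \<le> (\<Sum>l<k. \<bar>?E i l\<bar> * x l)"
    using assms(1) sum_abs[of "\<lambda>l. ?E i l * x l" "{..<k}"] by (simp add: abs_mult in_simplex_def)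
  also have "\<dots> \<le> (\<Sum>l<k. \<delta> * x l)"
    using assms abs_le_max_norm[of i k l k ?E for l]
    by (intro sum_mono mult_right_mono) (force simp: in_simplex_def)+
  also have "\<dots> = \<delta>" using assms(1) by (simp add: in_simplex_def sum_distrib_left[symmetric])
  finally show ?thesis .
qed

lemma linear_estimate_deviation:
  assumes wt: "word_topic D k A" and sx: "in_simplex k x"
    and row: "\<And>j. j < D \<Longrightarrow> \<bar>B i j\<bar> \<le> L" and "L > 0" "n > 0" "e \<ge> 0"
  shows "measure_pmf.prob (doc_pmf n D k A x)
     {w. \<bar>linear_estimate D B n w i - (\<Sum>j<D. B i j * (\<Sum>l<k. A j l * x l))\<bar> \<ge> e}
     \<le> 2 * exp (- (real n * e\<^sup>2) / (2 * L\<^sup>2))"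
proof -
  define c where "c j = (if j < D then B i j else 0)" for j
  have "\<bar>c j\<bar> \<le> L" for j using row \<open>L > 0\<close> by (simp add: c_def)
  note bound = doc_pmf_hoeffding[OF wt sx this \<open>L > 0\<close> \<open>n > 0\<close> \<open>e \<ge> 0\<close>]
  have "linear_estimate D B n w i - (\<Sum>j<D. B i j * (\<Sum>l<k. A j l * x l))
      = ((\<Sum>t<n. c (w t)) - real n * (\<Sum>j<D. c j * (\<Sum>l<k. A j l * x l))) / real n" for w
    using \<open>n > 0\<close> by (simp add: linear_estimate_def sum_count_vec c_def field_simps)
  hence "{w. \<bar>linear_estimate D B n w i - (\<Sum>j<D. B i j * (\<Sum>l<k. A j l * x l))\<bar> \<ge> e}
      = {w. \<bar>(\<Sum>t<n. c (w t)) - real n * (\<Sum>j<D. c j * (\<Sum>l<k. A j l * x l))\<bar> \<ge> real n * e}"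
    using \<open>n > 0\<close> by (auto simp: pos_le_divide_eq mult.commute)
  thus ?thesis using bound by simp
qed

lemma exp_hoeffding_exponent_at_log_scale:
  assumes "L > 0" "n > 0" "k > 0"
  shows "exp (- (real n * (2 * L * sqrt (ln (real k) / real n))\<^sup>2) / (2 * L\<^sup>2)) = 1 / (real k)\<^sup>2"
proof -
  have "real n * (2 * L * sqrt (ln (real k) / real n))\<^sup>2 / (2 * L\<^sup>2) = 2 * ln (real k)"
    using assms by (simp add: power_mult_distrib)
  hence "exp (- (real n * (2 * L * sqrt (ln (real k) / real n))\<^sup>2) / (2 * L\<^sup>2))
      = inverse (exp (2 * ln (real k)))" by (simp add: exp_minus)
  also have "exp (2 * ln (real k)) = (real k)\<^sup>2"
    using exp_of_nat_mult[of 2 "ln (real k)"] \<open>k > 0\<close> by simp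
  finally show ?thesis by (simp add: inverse_eq_divide)
qed

lemma linear_estimate_close:
  assumes wt: "word_topic D k A" and sx: "in_simplex k x"
    and bias: "max_norm k k (BA_minus_I D k B A) \<le> \<delta>"
    and entries: "\<And>i j. i < k \<Longrightarrow> j < D \<Longrightarrow> \<bar>B i j\<bar> \<le> L"
    and "L > 0" "n > 0" "k > 0"
  shows "measure_pmf.prob (doc_pmf n D k A x)
     {w. \<forall>i<k. \<bar>linear_estimate D B n w i - x i\<bar> < 2 * L * sqrt (ln (real k) / real n) + \<delta>}
     \<ge> 1 - 2 / real k"
proof -
  let ?P = "doc_pmf n D k A x"
  define e where "e = 2 * L * sqrt (ln (real k) / real n)"
  define \<mu> where "\<mu> i = (\<Sum>j<D. B i j * (\<Sum>l<k. A j l * x l))" for i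
  define Bad where "Bad i = {w. \<bar>linear_estimate D B n w i - \<mu> i\<bar> \<ge> e}" for i
  have "e \<ge> 0" using assms by (simp add: e_def)
  have "exp (- (real n * e\<^sup>2) / (2 * L\<^sup>2)) = 1 / (real k)\<^sup>2"
    unfolding e_def using \<open>L > 0\<close> \<open>n > 0\<close> \<open>k > 0\<close> by (rule exp_hoeffding_exponent_at_log_scale)
  hence "measure_pmf.prob ?P (Bad i) \<le> 2 / (real k)\<^sup>2" if "i < k" for i
    using linear_estimate_deviation[where B = B and i = i, OF wt sx entries[OF that] \<open>L > 0\<close> \<open>n > 0\<close> \<open>e \<ge> 0\<close>]
    unfolding Bad_def \<mu>_def by simp
  hence "measure_pmf.prob ?P (\<Union>i<k. Bad i) \<le> (\<Sum>i<k. 2 / (real k)\<^sup>2)"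
    by (intro order.trans[OF measure_pmf.finite_measure_subadditive_finite] sum_mono) auto
  also have "\<dots> = 2 / real k" by (simp add: power2_eq_square)
  finally have union: "measure_pmf.prob ?P (\<Union>i<k. Bad i) \<le> 2 / real k" .
  have "UNIV - (\<Union>i<k. Bad i) \<subseteq> {w. \<forall>i<k. \<bar>linear_estimate D B n w i - x i\<bar> < e + \<delta>}"
  proof safe
    fix w i assume "i < k" "w \<notin> (\<Union>i<k. Bad i)"
    hence "\<bar>linear_estimate D B n w i - \<mu> i\<bar> < e" by (auto simp: Bad_def not_le)
    moreover have "\<bar>\<mu> i - x i\<bar> \<le> \<delta>" using linear_inverse_bias[OF sx bias \<open>i < k\<close>] by (simp add: \<mu>_def)
    ultimately show "\<bar>linear_estimate D B n w i - x i\<bar> < e + \<delta>" by linarith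
  qed
  hence "measure_pmf.prob ?P (UNIV - (\<Union>i<k. Bad i))
      \<le> measure_pmf.prob ?P {w. \<forall>i<k. \<bar>linear_estimate D B n w i - x i\<bar> < e + \<delta>}"
    by (intro measure_pmf.finite_measure_mono) auto
  thus ?thesis using union measure_pmf.prob_compl[of "\<Union>i<k. Bad i" ?P] by (simp add: e_def)
qed

definition tli_threshold :: "nat \<Rightarrow> nat \<Rightarrow> (nat \<Rightarrow> nat \<Rightarrow> real) \<Rightarrow> real \<Rightarrow> nat \<Rightarrow> real" where
  "tli_threshold D k A \<delta> n = 2 * lambda_delta D k A \<delta> * sqrt (ln (real k) / real n) + \<delta>"

lemma TLI_count_vec:
  "TLI D k A \<delta> B n (count_vec n w) i =
     (if linear_estimate D B n w i < tli_threshold D k A \<delta> n then 0 else linear_estimate D B n w i)"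
  by (simp add: TLI_def linear_estimate_def tli_threshold_def)

lemma bias_ge_one_if_zero_inverse:
  assumes "k > 0" "\<And>i j. i < k \<Longrightarrow> j < D \<Longrightarrow> B i j = 0"
  shows "1 \<le> max_norm k k (BA_minus_I D k B A)"
  using abs_le_max_norm[of 0 k 0 k "BA_minus_I D k B A"] assms by (simp add: BA_minus_I_def)

text \<open>The window is closed on the left because in the degenerate case \<open>\<lambda>\<^sub>\<delta>(A) = 0\<close> the estimate
  is \<open>0\<close> and \<open>\<tau> = \<delta>\<close> may equal \<open>x\<^sub>i = 1\<close>.\<close>

definition estimate_in_window :: "nat \<Rightarrow> nat \<Rightarrow> (nat \<Rightarrow> nat \<Rightarrow> real) \<Rightarrow> real \<Rightarrow> (nat \<Rightarrow> nat \<Rightarrow> real) \<Rightarrow> nat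
    \<Rightarrow> (nat \<Rightarrow> real) \<Rightarrow> (nat \<Rightarrow> nat) set" where
  "estimate_in_window D k A \<delta> B n x = {w. \<forall>i<k. linear_estimate D B n w i \<in>
     {x i - tli_threshold D k A \<delta> n..<x i + tli_threshold D k A \<delta> n}}"

lemma prob_estimate_in_window:
  assumes wt: "word_topic D k A" and mvi: "biased_mvi D k A \<delta> B"
    and sx: "in_simplex k x" and "n > 0" "k \<ge> 2"
  defines "\<tau> \<equiv> tli_threshold D k A \<delta> n"
  shows "0 < \<tau> \<and> measure_pmf.prob (doc_pmf n D k A x) (estimate_in_window D k A \<delta> B n x) \<ge> 1 - 2 / real k"
proof -
  let ?L = "lambda_delta D k A \<delta>"
  have bias: "max_norm k k (BA_minus_I D k B A) \<le> \<delta>" and norm: "max_norm k D B = ?L"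
    using mvi by (auto simp: biased_mvi_def)
  have entries: "\<bar>B i j\<bar> \<le> ?L" if "i < k" "j < D" for i j
    using abs_le_max_norm[OF that, of B] norm by simp
  have "0 \<le> \<delta>" using bias max_norm_nonneg order.trans by blast
  consider "?L = 0" | "?L > 0" using norm max_norm_nonneg[of k D B] by linarith
  thus ?thesis
  proof cases
    case 1
    hence B0: "B i j = 0" if "i < k" "j < D" for i j using entries[OF that] by simp
    hence "linear_estimate D B n w i = 0" if "i < k" for w i using that by (simp add: linear_estimate_def)
    moreover have "1 \<le> \<delta>"
      using bias_ge_one_if_zero_inverse[of k D B A] B0 bias \<open>k \<ge> 2\<close> by force
    moreover have "0 \<le> x i \<and> x i \<le> 1" if "i < k" for i
      using sx that member_le_sum[of i "{..<k}" x] by (auto simp: in_simplex_def)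
    ultimately have "estimate_in_window D k A \<delta> B n x = UNIV"
      using 1 by (force simp: estimate_in_window_def tli_threshold_def)
    thus ?thesis using 1 \<open>1 \<le> \<delta>\<close> by (simp add: \<tau>_def tli_threshold_def)
  next
    case 2
    have "0 < ln (real k)" using \<open>k \<ge> 2\<close> by simp
    hence "0 < \<tau>" using 2 \<open>0 \<le> \<delta>\<close> \<open>n > 0\<close> by (simp add: \<tau>_def tli_threshold_def add_pos_nonneg)
    have "1 - 2 / real k \<le> measure_pmf.prob (doc_pmf n D k A x)
        {w. \<forall>i<k. \<bar>linear_estimate D B n w i - x i\<bar> < \<tau>}"
      using linear_estimate_close[OF wt sx bias entries 2 \<open>n > 0\<close>] \<open>k \<ge> 2\<close>
      by (simp add: \<tau>_def tli_threshold_def)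
    also have "\<dots> \<le> measure_pmf.prob (doc_pmf n D k A x) (estimate_in_window D k A \<delta> B n x)"
      by (intro measure_pmf.finite_measure_mono) (auto simp: estimate_in_window_def \<tau>_def abs_less_iff)
    finally show ?thesis using \<open>0 < \<tau>\<close> by simp
  qed
qed

lemma prob_ge_if_estimate_in_window_imp:
  assumes "word_topic D k A" "biased_mvi D k A \<delta> B" "in_simplex k x" "n > 0"
    and "k = 0 \<Longrightarrow> S = UNIV"
    and "0 < tli_threshold D k A \<delta> n \<Longrightarrow> estimate_in_window D k A \<delta> B n x \<subseteq> S"
  shows "measure_pmf.prob (doc_pmf n D k A x) S \<ge> 1 - 2 / real k"
proof (cases "k \<ge> 2")
  case True
  note window = prob_estimate_in_window[OF assms(1-4) True]
  hence "measure_pmf.prob (doc_pmf n D k A x) (estimate_in_window D k A \<delta> B n x)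
      \<le> measure_pmf.prob (doc_pmf n D k A x) S"
    using assms(6) by (intro measure_pmf.finite_measure_mono) auto
  thus ?thesis using window by linarith
next
  case False
  hence "k = 0 \<or> k = 1" by auto
  thus ?thesis using assms(5) measure_nonneg[of "measure_pmf (doc_pmf n D k A x)" S]
    by (auto simp del: measure_nonneg)
qed

lemma threshold_le_of_sample_size:
  fixes L \<delta> \<epsilon> c N r :: real
  assumes "0 \<le> L" "0 < r" "0 < \<epsilon>" "0 \<le> c" "0 < N" "4 * \<delta> * r < \<epsilon>"
    and "64 * L\<^sup>2 * r\<^sup>2 * c / \<epsilon>\<^sup>2 \<le> N"
  shows "2 * (2 * L * sqrt (c / N) + \<delta>) \<le> \<epsilon> / r"
proof -
  have "64 * L\<^sup>2 * r\<^sup>2 * c \<le> N * \<epsilon>\<^sup>2" using assms by (simp add: pos_divide_le_eq)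
  hence "L\<^sup>2 * c / N \<le> (\<epsilon> / (8 * r))\<^sup>2" using assms by (simp add: field_simps power2_eq_square)
  hence "sqrt (L\<^sup>2 * c / N) \<le> \<epsilon> / (8 * r)"
    using assms real_sqrt_le_mono by fastforce
  hence "L * sqrt (c / N) \<le> \<epsilon> / (8 * r)" using \<open>0 \<le> L\<close> by (simp add: real_sqrt_mult real_sqrt_divide)
  moreover have "\<delta> < \<epsilon> / (4 * r)" using assms by (simp add: field_simps)
  ultimately show ?thesis using \<open>0 < r\<close> by (simp add: field_simps)
qed

lemma in_simplex_support_nonempty: "in_simplex k x \<Longrightarrow> card {i. i < k \<and> x i \<noteq> 0} > 0"
  by (auto simp: in_simplex_def card_gt_0_iff intro: ccontr[of "\<exists>i<k. x i \<noteq> 0"] dest!: sum.neutral)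

theorem corollary4p3:
  fixes D k n :: nat and A B :: "nat \<Rightarrow> nat \<Rightarrow> real" and \<delta> :: real and xs :: "nat \<Rightarrow> real"
  assumes "word_topic D k A" and "\<delta> \<ge> 0" and "biased_mvi D k A \<delta> B"
    and "in_simplex k xs" and "n > 0"
  shows "measure_pmf.prob (doc_pmf n D k A xs)
           {w. \<forall>i<k. let x = TLI D k A \<delta> B n (count_vec n w) in
                 (xs i = 0 \<longrightarrow> x i = 0) \<and>
                 (xs i \<ge> 4 * lambda_delta D k A \<delta> * sqrt (ln (real k) / real n) + 2 * \<delta>
                    \<longrightarrow> x i > 0)}
         \<ge> 1 - 2 / real k
       \<and> (\<forall>(r::nat) (\<epsilon>::real).
            card {i. i < k \<and> xs i \<noteq> 0} \<le> r \<and>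
            (\<forall>i<k. xs i \<noteq> 0 \<longrightarrow> xs i \<ge> \<epsilon> / real r) \<and>
            \<epsilon> > 4 * \<delta> * real r \<and>
            real n \<ge> 64 * (lambda_delta D k A \<delta>)\<^sup>2 * (real r)\<^sup>2 * ln (real k) / \<epsilon>\<^sup>2
          \<longrightarrow> measure_pmf.prob (doc_pmf n D k A xs)
                {w. {i. i < k \<and> TLI D k A \<delta> B n (count_vec n w) i \<noteq> 0}
                    = {i. i < k \<and> xs i \<noteq> 0}}
              \<ge> 1 - 2 / real k)"
proof -
  let ?\<tau> = "tli_threshold D k A \<delta> n"
  have twice: "4 * lambda_delta D k A \<delta> * sqrt (ln (real k) / real n) + 2 * \<delta> = 2 * ?\<tau>"
    by (simp add: tli_threshold_def)
  note event = prob_ge_if_estimate_in_window_imp[OF assms(1,3,4,5)]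
  show ?thesis
  proof (intro conjI allI impI)
    show "measure_pmf.prob (doc_pmf n D k A xs) {w. \<forall>i<k. let x = TLI D k A \<delta> B n (count_vec n w) in
        (xs i = 0 \<longrightarrow> x i = 0) \<and> (xs i \<ge> 4 * lambda_delta D k A \<delta> * sqrt (ln (real k) / real n) + 2 * \<delta>
          \<longrightarrow> x i > 0)} \<ge> 1 - 2 / real k"
      by (rule event) (auto simp: Let_def twice TLI_count_vec estimate_in_window_def)
  next
    fix r :: nat and \<epsilon> :: real
    assume sparse: "card {i. i < k \<and> xs i \<noteq> 0} \<le> r \<and> (\<forall>i<k. xs i \<noteq> 0 \<longrightarrow> xs i \<ge> \<epsilon> / real r) \<and>
      \<epsilon> > 4 * \<delta> * real r \<and> real n \<ge> 64 * (lambda_delta D k A \<delta>)\<^sup>2 * (real r)\<^sup>2 * ln (real k) / \<epsilon>\<^sup>2"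
    have "r > 0" using sparse in_simplex_support_nonempty[OF assms(4)] by linarith
    have "0 \<le> 4 * \<delta> * real r" using \<open>\<delta> \<ge> 0\<close> by simp
    hence "\<epsilon> > 0" using sparse by linarith
    have "0 \<le> lambda_delta D k A \<delta>"
      using assms(3) max_norm_nonneg by (metis biased_mvi_def)
    hence "2 * ?\<tau> \<le> \<epsilon> / real r" if "k > 0"
      using threshold_le_of_sample_size[of _ "real r" \<epsilon> "ln (real k)" "real n" \<delta>]
        sparse that \<open>r > 0\<close> \<open>\<epsilon> > 0\<close> \<open>n > 0\<close> by (simp add: tli_threshold_def)
    hence "\<forall>i<k. xs i \<noteq> 0 \<longrightarrow> 2 * ?\<tau> \<le> xs i" using sparse by force
    thus "measure_pmf.prob (doc_pmf n D k A xs) {w. {i. i < k \<and> TLI D k A \<delta> B n (count_vec n w) i \<noteq> 0}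
        = {i. i < k \<and> xs i \<noteq> 0}} \<ge> 1 - 2 / real k"
      by (intro event) (force simp: TLI_count_vec estimate_in_window_def)+
  qed
qed

end
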